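(* Let $L_1\subseteq T^\omega_{\Sigma_1}$ and $L_2\subseteq T^\omega_{\Sigma_2}$ be regular tree languages, and let $F:\Sigma_1^*\to\Sigma_2$ be a function definable by a Moore machine. Assume that for every $t\in T^\omega_{\Sigma_1}$, $t\in L_1$ iff $\widehat{F}(t)\in L_2$. Then $da(L_1)\le da(L_2)$.
   Context: $T^\omega_\Sigma$ is the set of trees $t:\{l,r\}^*\to\Sigma$. A Moore machine $M=(\Sigma,\Gamma,Q,q_I,\delta,out)$ has finite state set $Q$, initial state $q_I$, transition function $\delta:Q\times\Sigma\to Q$ and output $out:Q\to\Gamma$; $\widehat\delta(\epsilon)=q_I$, $\widehat\delta(w a)=\delta(\widehat\delta(w),a)$; $F:\Sigma^*\to\Gamma$ is definable by $M$ if $F(w)=out(\widehat\delta(w))$ for all $w$. For $t_1\in T^\omega_{\Sigma_1}$, $\widehat F(t_1)\in T^\omega_{\Sigma_2}$ is defined by $\widehat F(t_1)(v)=F(t_1(v_1)\cdots t_1(v_k))$ where $v_1,\dots,v_k$ is the path from the root to $v$. A parity tree automaton (PTA) $\mathcal{A}=(Q,\Sigma,Q_I,\delta,\mathbb{C})$ ($Q$ finite, $Q_I\subseteq Q$, $\delta\subseteq Q\times\Sigma\times Q\times Q$, $\mathbb{C}:Q\to\mathbb{N}$) has computations $\phi:\{l,r\}^*\to Q$ with $\phi(\epsilon)\in Q_I$, $(\phi(v),t(v),\phi(vl),\phi(vr))\in\delta$, accepting if on every branch the largest color seen infinitely often is even; $ACC(\mathcal{A},t)$ the set of accepting computations. Degree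 $da(\mathcal{A})$: $k$ if $|ACC(\mathcal{A},t)|\le k$ for all $t$ and ($k=1$ or not for $k-1$); "finite" if all finite but unbounded; $\aleph_0$ if all countable, not all finite; $2^{\aleph_0}$ otherwise; ordered $1<2<\dots<\text{finite}<\aleph_0<2^{\aleph_0}$. For a regular language $L$, $da(L)=\min\{da(\mathcal{A})\mid L(\mathcal{A})=L\}$. *)

theory Defs
  imports Main "HOL-Library.Countable_Set"
begin

datatype dir = Lft | Rgt

type_synonym 'a tree = "dir list \<Rightarrow> 'a"

record 'a pta =
  states :: "nat set"
  init   :: "nat set"
  trans  :: "(nat \<times> 'a \<times> nat \<times> nat) set"
  col    :: "nat \<Rightarrow> nat"

definition wf_pta :: "'a pta \<Rightarrow> bool" where
  "wf_pta A \<longleftrightarrow> finite (states A) \<and> init A \<subseteq> states A \<and>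
     (\<forall>(p, a, q1, q2) \<in> trans A. p \<in> states A \<and> q1 \<in> states A \<and> q2 \<in> states A)"

definition is_comp :: "'a pta \<Rightarrow> 'a tree \<Rightarrow> nat tree \<Rightarrow> bool" where
  "is_comp A t \<phi> \<longleftrightarrow> \<phi> [] \<in> init A \<and>
     (\<forall>v. (\<phi> v, t v, \<phi> (v @ [Lft]), \<phi> (v @ [Rgt])) \<in> trans A)"

definition branch_node :: "(nat \<Rightarrow> dir) \<Rightarrow> nat \<Rightarrow> dir list" where
  "branch_node \<pi> n = map \<pi> [0..<n]"

definition accepting :: "'a pta \<Rightarrow> nat tree \<Rightarrow> bool" where
  "accepting A \<phi> \<longleftrightarrow>
     (\<forall>\<pi> :: nat \<Rightarrow> dir. even (Max {c. \<exists>\<^sub>\<infinity> n. col A (\<phi> (branch_node \<pi> n)) = c}))"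

definition ACC :: "'a pta \<Rightarrow> 'a tree \<Rightarrow> nat tree set" where
  "ACC A t = {\<phi>. is_comp A t \<phi> \<and> accepting A \<phi>}"

definition lang :: "'a pta \<Rightarrow> 'a tree set" where
  "lang A = {t. ACC A t \<noteq> {}}"

definition regular :: "'a tree set \<Rightarrow> bool" where
  "regular L \<longleftrightarrow> (\<exists>A. wf_pta A \<and> lang A = L)"

datatype degree = DNum nat | DFinite | DAleph0 | DCont

fun deg_le :: "degree \<Rightarrow> degree \<Rightarrow> bool" where
  "deg_le (DNum a) (DNum b) = (a \<le> b)"
| "deg_le (DNum _) _ = True"
| "deg_le DFinite (DNum _) = False"
| "deg_le DFinite _ = True"
| "deg_le DAleph0 d = (d = DAleph0 \<or> d = DCont)"
| "deg_le DCont d = (d = DCont)"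

definition da :: "'a pta \<Rightarrow> degree" where
  "da A =
    (if \<exists>k. \<forall>t. finite (ACC A t) \<and> card (ACC A t) \<le> k
     then DNum (LEAST k. 1 \<le> k \<and> (\<forall>t. finite (ACC A t) \<and> card (ACC A t) \<le> k))
     else if \<forall>t. finite (ACC A t) then DFinite
     else if \<forall>t. countable (ACC A t) then DAleph0
     else DCont)"

definition da_lang :: "'a tree set \<Rightarrow> degree" where
  "da_lang L = (THE d. (\<exists>A. wf_pta A \<and> lang A = L \<and> da A = d) \<and>
                       (\<forall>A. wf_pta A \<and> lang A = L \<longrightarrow> deg_le d (da A)))"

record ('a, 'b) moore =
  mstates :: "nat set"
  minit   :: nat
  mdelta  :: "nat \<Rightarrow> 'a \<Rightarrow> nat"
  mout    :: "nat \<Rightarrow> 'b"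

definition wf_moore :: "('a, 'b) moore \<Rightarrow> bool" where
  "wf_moore M \<longleftrightarrow> finite (mstates M) \<and> minit M \<in> mstates M \<and>
     (\<forall>q a. q \<in> mstates M \<longrightarrow> mdelta M q a \<in> mstates M)"

definition delta_hat :: "('a, 'b) moore \<Rightarrow> 'a list \<Rightarrow> nat" where
  "delta_hat M w = foldl (mdelta M) (minit M) w"

definition moore_definable :: "('a list \<Rightarrow> 'b) \<Rightarrow> bool" where
  "moore_definable F \<longleftrightarrow> (\<exists>M. wf_moore M \<and> (\<forall>w. F w = mout M (delta_hat M w)))"

text \<open>F-hat(t)(v) = F(t(v_1)...t(v_k)), v_1 = root, ..., v_k = v the path from the root to v.\<close>
definition F_hat :: "('a list \<Rightarrow> 'b) \<Rightarrow> 'a tree \<Rightarrow> 'b tree" where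
  "F_hat F t v = F (map (\<lambda>i. t (take i v)) [0..<Suc (length v)])"

end

theory Submission
  imports Defs "HOL-Library.Nat_Bijection" "HOL-Library.Product_Lexorder"
begin

text \<open>Take a PTA \<open>A\<close> of minimal degree for \<open>L\<^sub>2\<close> and run it in parallel with the Moore
  machine \<open>M\<close> defining \<open>F\<close>: on every branch the product tracks the (deterministic) state of \<open>M\<close>
  and feeds the output of \<open>M\<close>, i.e. the label of \<open>F_hat F t\<close>, to \<open>A\<close>. Its accepting runs on \<open>t\<close>
  are exactly the accepting runs of \<open>A\<close> on \<open>F_hat F t\<close>, paired with the unique run of \<open>M\<close>.
  Hence the product recognises \<open>L\<^sub>1\<close>, and every set of accepting runs of it is the image of one of
  \<open>A\<close>, so its degree is at most \<open>da A = da_lang L\<^sub>2\<close>.\<close>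

fun deg_rank :: "degree \<Rightarrow> nat \<times> nat" where
  "deg_rank (DNum n) = (0, n)"
| "deg_rank DFinite = (1, 0)"
| "deg_rank DAleph0 = (2, 0)"
| "deg_rank DCont = (3, 0)"

lemma deg_le_iff_deg_rank: "deg_le d e \<longleftrightarrow> deg_rank d \<le> deg_rank e"
  by (cases d; cases e) auto

lemma inj_deg_rank: "inj deg_rank"
proof (rule injI)
  fix d e :: degree
  show "deg_rank d = deg_rank e \<Longrightarrow> d = e" by (cases d; cases e) auto
qed

lemma deg_le_antisym: "deg_le d e \<Longrightarrow> deg_le e d \<Longrightarrow> d = e"
  using inj_deg_rank by (auto simp: deg_le_iff_deg_rank inj_eq)

lemma deg_le_trans: "deg_le d e \<Longrightarrow> deg_le e f \<Longrightarrow> deg_le d f"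
  by (simp add: deg_le_iff_deg_rank)

lemma deg_le_exists_least:
  assumes "D \<noteq> {}"
  shows "\<exists>d\<in>D. \<forall>e\<in>D. deg_le d e"
proof -
  define r where "r = (LEAST r. r \<in> deg_rank ` D)"
  have "\<exists>r. r \<in> deg_rank ` D"
    using assms by blast
  then have "r \<in> deg_rank ` D"
    unfolding r_def by (rule LeastI_ex)
  then obtain d where d: "d \<in> D" "deg_rank d = r" by blast
  have "deg_le d e" if "e \<in> D" for e
  proof -
    have "r \<le> deg_rank e"
      unfolding r_def using that by (intro Least_le imageI)
    then show ?thesis
      using d by (simp add: deg_le_iff_deg_rank)
  qed
  with d show ?thesis by blast
qed

lemma da_lang_is_least:
  assumes "regular L"
  shows "(\<exists>A. wf_pta A \<and> lang A = L \<and> da A = da_lang L) \<and>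
         (\<forall>A. wf_pta A \<and> lang A = L \<longrightarrow> deg_le (da_lang L) (da A))"
proof -
  let ?least = "\<lambda>d. (\<exists>A. wf_pta A \<and> lang A = L \<and> da A = d) \<and>
                     (\<forall>A. wf_pta A \<and> lang A = L \<longrightarrow> deg_le d (da A))"
  have "da ` {A. wf_pta A \<and> lang A = L} \<noteq> {}"
    using assms unfolding regular_def by blast
  then obtain d where "d \<in> da ` {A. wf_pta A \<and> lang A = L}"
      and "\<forall>e \<in> da ` {A. wf_pta A \<and> lang A = L}. deg_le d e"
    using deg_le_exists_least by meson
  then have "?least d" by blast
  moreover have "e = d" if "?least e" for e
    using that \<open>?least d\<close> deg_le_antisym by blast
  ultimately have "?least (THE d. ?least d)"
    by (rule theI)
  then show ?thesis unfolding da_lang_def .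
qed

lemma da_lang_attained:
  assumes "regular L"
  obtains A where "wf_pta A" "lang A = L" "da A = da_lang L"
  using da_lang_is_least[OF assms] by blast

lemma da_lang_le_da:
  assumes "regular L" "wf_pta A" "lang A = L"
  shows "deg_le (da_lang L) (da A)"
  using da_lang_is_least[OF assms(1)] assms(2,3) by blast

section \<open>Degrees as cardinality bounds\<close>

fun size_le_degree :: "degree \<Rightarrow> 'x set \<Rightarrow> bool" where
  "size_le_degree (DNum k) X \<longleftrightarrow> finite X \<and> card X \<le> k"
| "size_le_degree DFinite X \<longleftrightarrow> finite X"
| "size_le_degree DAleph0 X \<longleftrightarrow> countable X"
| "size_le_degree DCont X \<longleftrightarrow> True"

lemma size_le_degree_subset_image:
  assumes "size_le_degree d X" and Y: "Y \<subseteq> g ` X"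
  shows "size_le_degree d Y"
proof (cases d)
  case (DNum k)
  with assms have "finite X" "card X \<le> k" by simp_all
  have "card Y \<le> card (g ` X)"
    using card_mono[OF finite_imageI[OF \<open>finite X\<close>] Y] .
  also have "\<dots> \<le> card X"
    using card_image_le[OF \<open>finite X\<close>] .
  finally show ?thesis
    using DNum \<open>card X \<le> k\<close> finite_subset[OF Y finite_imageI[OF \<open>finite X\<close>]] by simp
next
  case DFinite
  with assms show ?thesis by (simp add: finite_subset[OF Y])
next
  case DAleph0
  with assms show ?thesis by (simp add: countable_subset[OF Y])
qed simp

definition ACC_card_bound :: "'a pta \<Rightarrow> nat \<Rightarrow> bool" where
  "ACC_card_bound A k \<longleftrightarrow> (\<forall>t. finite (ACC A t) \<and> card (ACC A t) \<le> k)"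

lemma da_alt_def:
  "da A = (if \<exists>k. ACC_card_bound A k then DNum (LEAST k. 1 \<le> k \<and> ACC_card_bound A k)
           else if \<forall>t. finite (ACC A t) then DFinite
           else if \<forall>t. countable (ACC A t) then DAleph0
           else DCont)"
  unfolding da_def ACC_card_bound_def ..

lemma Least_ACC_card_bound:
  assumes "ACC_card_bound A k"
  shows "1 \<le> (LEAST k. 1 \<le> k \<and> ACC_card_bound A k)
    \<and> ACC_card_bound A (LEAST k. 1 \<le> k \<and> ACC_card_bound A k)"
proof (rule LeastI)
  show "1 \<le> max 1 k \<and> ACC_card_bound A (max 1 k)"
    using assms unfolding ACC_card_bound_def by (auto simp: le_max_iff_disj)
qed

lemma size_le_da: "size_le_degree (da A) (ACC A t)"
proof (cases "\<exists>k. ACC_card_bound A k")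
  case True
  then obtain k where "ACC_card_bound A k" by blast
  define n where "n = (LEAST k. 1 \<le> k \<and> ACC_card_bound A k)"
  have "ACC_card_bound A n"
    unfolding n_def using Least_ACC_card_bound[OF \<open>ACC_card_bound A k\<close>] by blast
  moreover have "da A = DNum n"
    using True by (simp add: da_alt_def n_def)
  ultimately show ?thesis
    by (simp add: ACC_card_bound_def)
next
  case False
  then show ?thesis
    by (cases "\<forall>t. finite (ACC A t)"; cases "\<forall>t. countable (ACC A t)") (simp_all add: da_alt_def)
qed

lemma da_neq_DNum_0: "da A \<noteq> DNum 0"
proof
  assume "da A = DNum 0"
  then obtain k where "ACC_card_bound A k" "(LEAST k. 1 \<le> k \<and> ACC_card_bound A k) = 0"
    by (auto simp: da_alt_def split: if_splits)
  with Least_ACC_card_bound show False by fastforce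
qed

lemma da_le_degree:
  assumes "\<And>t. size_le_degree d (ACC A t)"
    and "d \<noteq> DNum 0" \<comment> \<open>\<open>da\<close> counts from 1, even for a PTA accepting no tree\<close>
  shows "deg_le (da A) d"
proof (cases d)
  case (DNum k)
  with assms have bound: "ACC_card_bound A k" and "1 \<le> k"
    by (auto simp: ACC_card_bound_def)
  then have "(LEAST k. 1 \<le> k \<and> ACC_card_bound A k) \<le> k"
    by (intro Least_le) simp
  with bound DNum show ?thesis
    by (auto simp: da_alt_def)
next
  case DFinite
  with assms have "\<forall>t. finite (ACC A t)" by simp
  with DFinite show ?thesis by (simp add: da_alt_def)
next
  case DAleph0
  with assms have "\<forall>t. countable (ACC A t)" by simp
  with DAleph0 show ?thesis by (simp add: da_alt_def)
next
  case DCont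
  then show ?thesis by (cases "da A") simp_all
qed

lemma da_mono:
  assumes "\<And>t. ACC A t \<subseteq> g t ` ACC B (S t)"
  shows "deg_le (da A) (da B)"
  using assms da_neq_DNum_0
  by (intro da_le_degree) (auto intro: size_le_degree_subset_image[OF size_le_da])

definition moore_fun :: "('a, 'b) moore \<Rightarrow> 'a list \<Rightarrow> 'b" where
  "moore_fun M w = mout M (delta_hat M w)"

definition moore_state_at :: "('a, 'b) moore \<Rightarrow> 'a tree \<Rightarrow> dir list \<Rightarrow> nat" where
  "moore_state_at M t v = delta_hat M (map (\<lambda>i. t (take i v)) [0..<length v])"

lemma moore_state_at_Nil [simp]: "moore_state_at M t [] = minit M"
  by (simp add: moore_state_at_def delta_hat_def)

lemma moore_state_at_snoc [simp]:
  "moore_state_at M t (v @ [d]) = mdelta M (moore_state_at M t v) (t v)"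
proof -
  have prefix: "map (\<lambda>i. t (take i (v @ [d]))) [0..<length v] = map (\<lambda>i. t (take i v)) [0..<length v]"
    by simp
  have "map (\<lambda>i. t (take i (v @ [d]))) [0..<length (v @ [d])]
      = map (\<lambda>i. t (take i (v @ [d]))) [0..<length v] @ [t v]"
    by simp
  also have "\<dots> = map (\<lambda>i. t (take i v)) [0..<length v] @ [t v]"
    by (simp only: prefix)
  finally have path: "map (\<lambda>i. t (take i (v @ [d]))) [0..<length (v @ [d])]
      = map (\<lambda>i. t (take i v)) [0..<length v] @ [t v]" .
  show ?thesis
    unfolding moore_state_at_def delta_hat_def path by simp
qed

lemma moore_state_at_in_mstates: "wf_moore M \<Longrightarrow> moore_state_at M t v \<in> mstates M"
  by (induction v rule: rev_induct) (auto simp: wf_moore_def)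

lemma F_hat_moore_fun:
  "F_hat (moore_fun M) t v = mout M (mdelta M (moore_state_at M t v) (t v))"
proof -
  have "map (\<lambda>i. t (take i v)) [0..<Suc (length v)]
      = map (\<lambda>i. t (take i v)) [0..<length v] @ [t v]"
    by simp
  then show ?thesis
    by (simp add: F_hat_def moore_fun_def moore_state_at_def delta_hat_def)
qed

section \<open>The product of a Moore machine and a parity tree automaton\<close>

text \<open>Reading the letter \<open>a\<close> at a node, the product advances \<open>M\<close> by \<open>a\<close> and
  lets \<open>A\<close> read the output of the new state, which is the label of the node in \<open>F_hat\<close>.\<close>

definition moore_product :: "('a, 'b) moore \<Rightarrow> 'b pta \<Rightarrow> 'a pta" where
  "moore_product M A = \<lparr>
     states = prod_encode ` (mstates M \<times> states A),
     init = (\<lambda>q. prod_encode (minit M, q)) ` init A,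
     trans = {(p, a, p1, p2).
       fst (prod_decode p) \<in> mstates M \<and>
       fst (prod_decode p1) = mdelta M (fst (prod_decode p)) a \<and>
       fst (prod_decode p2) = mdelta M (fst (prod_decode p)) a \<and>
       (snd (prod_decode p), mout M (fst (prod_decode p1)),
        snd (prod_decode p1), snd (prod_decode p2)) \<in> trans A},
     col = (\<lambda>p. col A (snd (prod_decode p))) \<rparr>"

lemma wf_moore_product:
  assumes "wf_moore M" and "wf_pta A"
  shows "wf_pta (moore_product M A)"
  unfolding wf_pta_def
proof (intro conjI)
  have "p \<in> prod_encode ` (mstates M \<times> states A)"
    if "fst (prod_decode p) \<in> mstates M" "snd (prod_decode p) \<in> states A" for p
    using that by (metis mem_Sigma_iff prod.collapse prod_decode_inverse rev_image_eqI)
  with assms show "\<forall>(p, a, p1, p2) \<in> trans (moore_product M A).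
      p \<in> states (moore_product M A) \<and> p1 \<in> states (moore_product M A) \<and>
      p2 \<in> states (moore_product M A)"
    unfolding wf_pta_def wf_moore_def moore_product_def by fastforce
qed (use assms in \<open>auto simp: wf_pta_def wf_moore_def moore_product_def\<close>)

definition pair_run :: "('a, 'b) moore \<Rightarrow> 'a tree \<Rightarrow> nat tree \<Rightarrow> nat tree" where
  "pair_run M t \<psi> v = prod_encode (moore_state_at M t v, \<psi> v)"

lemma accepting_moore_product:
  "accepting (moore_product M A) \<phi> \<longleftrightarrow> accepting A (\<lambda>v. snd (prod_decode (\<phi> v)))"
  by (simp add: accepting_def moore_product_def)

lemma is_comp_pair_run:
  assumes "wf_moore M" and "is_comp A (F_hat (moore_fun M) t) \<psi>"
  shows "is_comp (moore_product M A) t (pair_run M t \<psi>)"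
  using assms moore_state_at_in_mstates[OF assms(1)]
  by (auto simp: is_comp_def moore_product_def pair_run_def F_hat_moore_fun)

lemma moore_product_run_fst:
  assumes "is_comp (moore_product M A) t \<phi>"
  shows "fst (prod_decode (\<phi> v)) = moore_state_at M t v"
proof (induction v rule: rev_induct)
  case Nil
  then show ?case using assms by (auto simp: is_comp_def moore_product_def)
next
  case (snoc d v)
  have "(\<phi> v, t v, \<phi> (v @ [Lft]), \<phi> (v @ [Rgt])) \<in> trans (moore_product M A)"
    using assms by (simp add: is_comp_def)
  then show ?case
    using snoc by (cases d) (auto simp: moore_product_def)
qed

lemma is_comp_moore_product_snd:
  assumes "is_comp (moore_product M A) t \<phi>"
  shows "is_comp A (F_hat (moore_fun M) t) (\<lambda>v. snd (prod_decode (\<phi> v)))"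
  unfolding is_comp_def
proof (intro conjI allI)
  show "snd (prod_decode (\<phi> [])) \<in> init A"
    using assms by (auto simp: is_comp_def moore_product_def)
next
  fix v
  have "(\<phi> v, t v, \<phi> (v @ [Lft]), \<phi> (v @ [Rgt])) \<in> trans (moore_product M A)"
    using assms by (simp add: is_comp_def)
  then show "(snd (prod_decode (\<phi> v)), F_hat (moore_fun M) t v,
              snd (prod_decode (\<phi> (v @ [Lft]))), snd (prod_decode (\<phi> (v @ [Rgt])))) \<in> trans A"
    using moore_product_run_fst[OF assms, of v]
    by (auto simp: moore_product_def F_hat_moore_fun)
qed

lemma moore_product_run_eq_pair_run:
  assumes "is_comp (moore_product M A) t \<phi>"
  shows "\<phi> = pair_run M t (\<lambda>v. snd (prod_decode (\<phi> v)))"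
proof
  fix v
  have "prod_decode (\<phi> v) = (moore_state_at M t v, snd (prod_decode (\<phi> v)))"
    using moore_product_run_fst[OF assms, of v] by (simp add: prod_eq_iff)
  then have "prod_encode (prod_decode (\<phi> v)) = pair_run M t (\<lambda>v. snd (prod_decode (\<phi> v))) v"
    by (simp add: pair_run_def)
  then show "\<phi> v = pair_run M t (\<lambda>v. snd (prod_decode (\<phi> v))) v"
    by (simp only: prod_decode_inverse)
qed

lemma ACC_moore_product:
  assumes "wf_moore M"
  shows "ACC (moore_product M A) t = pair_run M t ` ACC A (F_hat (moore_fun M) t)"
proof (intro equalityI subsetI)
  fix \<phi> assume "\<phi> \<in> ACC (moore_product M A) t"
  then have run: "is_comp (moore_product M A) t \<phi>" and "accepting (moore_product M A) \<phi>"
    by (simp_all add: ACC_def)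
  then have "(\<lambda>v. snd (prod_decode (\<phi> v))) \<in> ACC A (F_hat (moore_fun M) t)"
    by (simp add: ACC_def accepting_moore_product is_comp_moore_product_snd)
  with moore_product_run_eq_pair_run[OF run]
  show "\<phi> \<in> pair_run M t ` ACC A (F_hat (moore_fun M) t)" by blast
next
  fix \<phi> assume "\<phi> \<in> pair_run M t ` ACC A (F_hat (moore_fun M) t)"
  then obtain \<psi> where "\<psi> \<in> ACC A (F_hat (moore_fun M) t)" "\<phi> = pair_run M t \<psi>" by blast
  moreover have "accepting (moore_product M A) (pair_run M t \<psi>) \<longleftrightarrow> accepting A \<psi>"
    by (simp add: accepting_moore_product pair_run_def)
  ultimately show "\<phi> \<in> ACC (moore_product M A) t"
    using is_comp_pair_run[OF assms] by (simp add: ACC_def)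
qed

theorem lemma3p10:
  fixes L1 :: "('a::finite) tree set" and L2 :: "('b::finite) tree set"
    and F :: "'a list \<Rightarrow> 'b"
  assumes "regular L1" and "regular L2"
    and "moore_definable F"
    and "\<forall>t. t \<in> L1 \<longleftrightarrow> F_hat F t \<in> L2"
  shows "deg_le (da_lang L1) (da_lang L2)"
proof -
  obtain M where M: "wf_moore M" and F: "F = moore_fun M"
    using assms(3) unfolding moore_definable_def moore_fun_def by fastforce
  obtain A2 where A2: "wf_pta A2" "lang A2 = L2" "da A2 = da_lang L2"
    using da_lang_attained[OF assms(2)] .
  let ?A1 = "moore_product M A2"
  have ACC: "ACC ?A1 t = pair_run M t ` ACC A2 (F_hat F t)" for t
    using ACC_moore_product[OF M] F by simp
  have "lang ?A1 = L1"
    using assms(4) A2(2) by (auto simp: lang_def ACC)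
  then have "deg_le (da_lang L1) (da ?A1)"
    using da_lang_le_da[OF assms(1) wf_moore_product[OF M A2(1)]] by blast
  moreover have "deg_le (da ?A1) (da A2)"
    using ACC by (intro da_mono[where g = "pair_run M" and S = "F_hat F"]) simp
  ultimately show ?thesis
    using A2(3) deg_le_trans by metis
qed

end
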